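(* Let $V$ be an irreducible $\tau$-module with finite-dimensional weight spaces, and let $z_1,z_2$ be non-zero central operators on $V$ of the same degree $\underline m$. Then $z_1=cz_2$ for some constant $c\in\mathbb C$. In particular, in each degree the non-zero central operators span a space of dimension at most one.
   Context: Let $\mathring{\mathfrak g}$ be a finite-dimensional simple Lie algebra over $\mathbb C$ with Cartan subalgebra $\mathring{\mathfrak h}$ and a nondegenerate invariant symmetric bilinear form $(\cdot,\cdot)$. Fix $n\ge2$, $A=\mathbb C[t_1^{\pm1},\dots,t_n^{\pm1}]$, $t^{\underline m}=t_1^{m_1}\cdots t_n^{m_n}$. Let $\mathcal Z$ be spanned by symbols $t^{\underline m}K_i$ subject to $\sum_im_it^{\underline m}K_i=0$; $K_i=t^0K_i$; $d(t^{\underline r})t^{\underline s}=\sum_ir_it^{\underline r+\underline s}K_i$. The toroidal Lie algebra $\tau=\mathring{\mathfrak g}\otimes A\oplus\mathcal Z\oplus D$, $D=\mathrm{span}(d_1,\dots,d_n)$, has bracket $[X\otimes t^{\underline r},Y\otimes t^{\underline s}]=[X,Y]\otimes t^{\underline r+\underline s}+(X,Y)d(t^{\underline r})t^{\underline s}$, $\mathcal Z$ central in $\mathring{\mathfrak g}\otimes A\oplus\mathcal Z$, $[d_i,X\otimes t^{\underline r}]=r_iX\otimes t^{\underline r}$, $[d_i,t^{\underline m}K_j]=m_it^{\underline m}K_j$, $[d_i,d_j]=0$. Weight spaces are with respect to $\underline{\mathfrak h}=\mathring{\mathfrak h}\oplus\mathrm{span}(K_i)\oplus D$. A central operator of degree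 $\underline m$ on $V$ is a linear map $z:V\to V$ commuting with the action of $\mathring{\mathfrak g}\otimes A\oplus\mathcal Z$ and satisfying $d_iz-zd_i=m_iz$ for all $i$. *)

theory Defs
  imports Complex_Main "HOL-Library.Cardinality"
begin

text \<open>Complex vector spaces are represented by an additive group type together with a
  scalar multiplication \<open>complex \<Rightarrow> 'a \<Rightarrow> 'a\<close> satisfying the library locale \<open>vector_space\<close>.\<close>

definition fin_dim :: "(complex \<Rightarrow> 'a::ab_group_add \<Rightarrow> 'a) \<Rightarrow> 'a set \<Rightarrow> bool" where
  "fin_dim s W \<longleftrightarrow> (\<exists>S. finite S \<and> S \<subseteq> W \<and> module.span s S = W)"

definition lie_algebra :: "(complex \<Rightarrow> 'g::ab_group_add \<Rightarrow> 'g) \<Rightarrow> ('g \<Rightarrow> 'g \<Rightarrow> 'g) \<Rightarrow> bool" where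
  "lie_algebra sg lb \<longleftrightarrow> vector_space sg \<and>
     (\<forall>x. Vector_Spaces.linear sg sg (lb x)) \<and> (\<forall>y. Vector_Spaces.linear sg sg (\<lambda>x. lb x y)) \<and>
     (\<forall>x. lb x x = 0) \<and>
     (\<forall>x y z. lb x (lb y z) + lb y (lb z x) + lb z (lb x y) = 0)"

definition lie_ideal :: "(complex \<Rightarrow> 'g::ab_group_add \<Rightarrow> 'g) \<Rightarrow> ('g \<Rightarrow> 'g \<Rightarrow> 'g) \<Rightarrow> 'g set \<Rightarrow> bool" where
  "lie_ideal sg lb I \<longleftrightarrow> module.subspace sg I \<and> (\<forall>x y. y \<in> I \<longrightarrow> lb x y \<in> I)"

definition simple_lie_algebra :: "(complex \<Rightarrow> 'g::ab_group_add \<Rightarrow> 'g) \<Rightarrow> ('g \<Rightarrow> 'g \<Rightarrow> 'g) \<Rightarrow> bool" where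
  "simple_lie_algebra sg lb \<longleftrightarrow> lie_algebra sg lb \<and> (\<exists>x y. lb x y \<noteq> 0) \<and>
     (\<forall>I. lie_ideal sg lb I \<longrightarrow> I = {0} \<or> I = UNIV)"

definition lie_subalgebra :: "(complex \<Rightarrow> 'g::ab_group_add \<Rightarrow> 'g) \<Rightarrow> ('g \<Rightarrow> 'g \<Rightarrow> 'g) \<Rightarrow> 'g set \<Rightarrow> bool" where
  "lie_subalgebra sg lb H \<longleftrightarrow> module.subspace sg H \<and> (\<forall>x\<in>H. \<forall>y\<in>H. lb x y \<in> H)"

text \<open>A subalgebra is nilpotent iff all sufficiently long nested brackets of its elements
  vanish (its lower central series reaches 0).\<close>
definition nilpotent_subalgebra :: "(complex \<Rightarrow> 'g::ab_group_add \<Rightarrow> 'g) \<Rightarrow> ('g \<Rightarrow> 'g \<Rightarrow> 'g) \<Rightarrow> 'g set \<Rightarrow> bool" where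
  "nilpotent_subalgebra sg lb H \<longleftrightarrow> lie_subalgebra sg lb H \<and>
     (\<exists>k. \<forall>xs y. length xs = k \<and> set xs \<subseteq> H \<and> y \<in> H \<longrightarrow> foldr lb xs y = 0)"

definition normalizer :: "('g \<Rightarrow> 'g \<Rightarrow> 'g) \<Rightarrow> 'g set \<Rightarrow> 'g set" where
  "normalizer lb H = {x. \<forall>y\<in>H. lb x y \<in> H}"

definition cartan_subalgebra :: "(complex \<Rightarrow> 'g::ab_group_add \<Rightarrow> 'g) \<Rightarrow> ('g \<Rightarrow> 'g \<Rightarrow> 'g) \<Rightarrow> 'g set \<Rightarrow> bool" where
  "cartan_subalgebra sg lb H \<longleftrightarrow> nilpotent_subalgebra sg lb H \<and> normalizer lb H = H"

definition nondeg_invariant_symmetric_form ::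
  "(complex \<Rightarrow> 'g::ab_group_add \<Rightarrow> 'g) \<Rightarrow> ('g \<Rightarrow> 'g \<Rightarrow> 'g) \<Rightarrow> ('g \<Rightarrow> 'g \<Rightarrow> complex) \<Rightarrow> bool" where
  "nondeg_invariant_symmetric_form sg lb B \<longleftrightarrow>
     (\<forall>x. Vector_Spaces.linear sg (*) (B x)) \<and> (\<forall>x y. B x y = B y x) \<and>
     (\<forall>x y z. B (lb x y) z = B x (lb y z)) \<and>
     (\<forall>x. (\<forall>y. B x y = 0) \<longrightarrow> x = 0)"

definition base_data ::
  "(complex \<Rightarrow> 'g::ab_group_add \<Rightarrow> 'g) \<Rightarrow> ('g \<Rightarrow> 'g \<Rightarrow> 'g) \<Rightarrow> ('g \<Rightarrow> 'g \<Rightarrow> complex) \<Rightarrow> 'g set \<Rightarrow> bool" where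
  "base_data sg lb B H \<longleftrightarrow> simple_lie_algebra sg lb \<and> fin_dim sg (UNIV :: 'g set) \<and>
     cartan_subalgebra sg lb H \<and> nondeg_invariant_symmetric_form sg lb B"

text \<open>Exponents \<open>r \<in> \<int>^n\<close> are functions \<open>'n \<Rightarrow> int\<close> with \<open>CARD('n) = n\<close>.
  A representation of \<open>\<tau>\<close> on \<open>V\<close> is a linear map \<open>\<tau> \<rightarrow> End(V)\<close> preserving brackets; it is
  determined by its values on spanning elements:
  \<open>X x r\<close> = action of \<open>x \<otimes> t^r\<close>, \<open>K r i\<close> = action of \<open>t^r K_i\<close>, \<open>D i\<close> = action of \<open>d_i\<close>,
  subject to linearity in \<open>x\<close>, the defining relations of \<open>\<Z>\<close>, and the bracket relations
  on spanning elements.\<close>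

definition comm :: "('v::ab_group_add \<Rightarrow> 'v) \<Rightarrow> ('v \<Rightarrow> 'v) \<Rightarrow> ('v \<Rightarrow> 'v)" where
  "comm a b = (\<lambda>v. a (b v) - b (a v))"

definition tau_module ::
  "(complex \<Rightarrow> 'g::ab_group_add \<Rightarrow> 'g) \<Rightarrow> ('g \<Rightarrow> 'g \<Rightarrow> 'g) \<Rightarrow> ('g \<Rightarrow> 'g \<Rightarrow> complex) \<Rightarrow>
   (complex \<Rightarrow> 'v::ab_group_add \<Rightarrow> 'v) \<Rightarrow>
   ('g \<Rightarrow> ('n::finite \<Rightarrow> int) \<Rightarrow> 'v \<Rightarrow> 'v) \<Rightarrow>
   (('n \<Rightarrow> int) \<Rightarrow> 'n \<Rightarrow> 'v \<Rightarrow> 'v) \<Rightarrow> ('n \<Rightarrow> 'v \<Rightarrow> 'v) \<Rightarrow> bool" where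
  "tau_module sg lb B sv X K D \<longleftrightarrow> vector_space sv \<and>
     (\<forall>x r. Vector_Spaces.linear sv sv (X x r)) \<and> (\<forall>r i. Vector_Spaces.linear sv sv (K r i)) \<and>
     (\<forall>i. Vector_Spaces.linear sv sv (D i)) \<and>
     (\<forall>r v. Vector_Spaces.linear sg sv (\<lambda>x. X x r v)) \<and>
     (\<forall>r v. (\<Sum>i\<in>UNIV. sv (of_int (r i)) (K r i v)) = 0) \<and>
     (\<forall>x y r s. comm (X x r) (X y s) =
         (\<lambda>v. X (lb x y) (\<lambda>j. r j + s j) v + sv (B x y) (\<Sum>i\<in>UNIV. sv (of_int (r i)) (K (\<lambda>j. r j + s j) i v)))) \<and>
     (\<forall>x r s j. comm (K s j) (X x r) = (\<lambda>v. 0)) \<and>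
     (\<forall>r i s j. comm (K r i) (K s j) = (\<lambda>v. 0)) \<and>
     (\<forall>i x r. comm (D i) (X x r) = (\<lambda>v. sv (of_int (r i)) (X x r v))) \<and>
     (\<forall>i r j. comm (D i) (K r j) = (\<lambda>v. sv (of_int (r i)) (K r j v))) \<and>
     (\<forall>i j. comm (D i) (D j) = (\<lambda>v. 0))"

text \<open>Weight space for the weight \<open>(\<mu>, k, \<delta>)\<close> of \<open>\<h> \<oplus> span(K_i) \<oplus> D\<close>;
  \<open>h \<in> \<h>\<close> acts as \<open>h \<otimes> t^0\<close>, and \<open>K_i = t^0 K_i\<close>.\<close>
definition weight_space ::
  "'g set \<Rightarrow> (complex \<Rightarrow> 'v::ab_group_add \<Rightarrow> 'v) \<Rightarrow> ('g \<Rightarrow> ('n::finite \<Rightarrow> int) \<Rightarrow> 'v \<Rightarrow> 'v) \<Rightarrow>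
   (('n \<Rightarrow> int) \<Rightarrow> 'n \<Rightarrow> 'v \<Rightarrow> 'v) \<Rightarrow> ('n \<Rightarrow> 'v \<Rightarrow> 'v) \<Rightarrow>
   ('g \<Rightarrow> complex) \<Rightarrow> ('n \<Rightarrow> complex) \<Rightarrow> ('n \<Rightarrow> complex) \<Rightarrow> 'v set" where
  "weight_space H sv X K D \<mu> k \<delta> =
     {v. (\<forall>h\<in>H. X h (\<lambda>_. 0) v = sv (\<mu> h) v) \<and> (\<forall>i. K (\<lambda>_. 0) i v = sv (k i) v) \<and> (\<forall>i. D i v = sv (\<delta> i) v)}"

definition fin_dim_weight_module ::
  "'g set \<Rightarrow> (complex \<Rightarrow> 'v::ab_group_add \<Rightarrow> 'v) \<Rightarrow> ('g \<Rightarrow> ('n::finite \<Rightarrow> int) \<Rightarrow> 'v \<Rightarrow> 'v) \<Rightarrow>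
   (('n \<Rightarrow> int) \<Rightarrow> 'n \<Rightarrow> 'v \<Rightarrow> 'v) \<Rightarrow> ('n \<Rightarrow> 'v \<Rightarrow> 'v) \<Rightarrow> bool" where
  "fin_dim_weight_module H sv X K D \<longleftrightarrow>
     module.span sv (\<Union>\<mu> k \<delta>. weight_space H sv X K D \<mu> k \<delta>) = UNIV \<and>
     (\<forall>\<mu> k \<delta>. fin_dim sv (weight_space H sv X K D \<mu> k \<delta>))"

definition irreducible_module ::
  "(complex \<Rightarrow> 'v::ab_group_add \<Rightarrow> 'v) \<Rightarrow> ('g \<Rightarrow> ('n::finite \<Rightarrow> int) \<Rightarrow> 'v \<Rightarrow> 'v) \<Rightarrow>
   (('n \<Rightarrow> int) \<Rightarrow> 'n \<Rightarrow> 'v \<Rightarrow> 'v) \<Rightarrow> ('n \<Rightarrow> 'v \<Rightarrow> 'v) \<Rightarrow> bool" where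
  "irreducible_module sv X K D \<longleftrightarrow> (UNIV :: 'v set) \<noteq> {0} \<and>
     (\<forall>W. module.subspace sv W \<and> (\<forall>x r. X x r ` W \<subseteq> W) \<and> (\<forall>r i. K r i ` W \<subseteq> W) \<and>
          (\<forall>i. D i ` W \<subseteq> W)
        \<longrightarrow> W = {0} \<or> W = UNIV)"

definition central_operator ::
  "(complex \<Rightarrow> 'v::ab_group_add \<Rightarrow> 'v) \<Rightarrow> ('g \<Rightarrow> ('n::finite \<Rightarrow> int) \<Rightarrow> 'v \<Rightarrow> 'v) \<Rightarrow>
   (('n \<Rightarrow> int) \<Rightarrow> 'n \<Rightarrow> 'v \<Rightarrow> 'v) \<Rightarrow> ('n \<Rightarrow> 'v \<Rightarrow> 'v) \<Rightarrow> ('n \<Rightarrow> int) \<Rightarrow> ('v \<Rightarrow> 'v) \<Rightarrow> bool" where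
  "central_operator sv X K D m z \<longleftrightarrow> Vector_Spaces.linear sv sv z \<and>
     (\<forall>x r. comm z (X x r) = (\<lambda>v. 0)) \<and> (\<forall>r i. comm z (K r i) = (\<lambda>v. 0)) \<and>
     (\<forall>i. comm (D i) z = (\<lambda>v. sv (of_int (m i)) (z v)))"

end

theory Submission
  imports Defs "HOL-Computational_Algebra.Fundamental_Theorem_Algebra"
begin

text \<open>This is Schur's lemma. For every \<open>c\<close> the equaliser \<open>{v. z\<^sub>1 v = c z\<^sub>2 v}\<close> is a
  \<open>\<tau>\<close>-submodule, hence \<open>0\<close> or \<open>V\<close>. For \<open>z\<^sub>1 = z\<^sub>2\<close> and \<open>c = 0\<close> this is the kernel of
  \<open>z\<^sub>2\<close>, and the range of \<open>z\<^sub>2\<close> is a submodule too, so \<open>z\<^sub>2\<close> is bijective. Then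
  \<open>T = z\<^sub>2\<^sup>-\<^sup>1 z\<^sub>1\<close> is a central operator of degree \<open>0\<close> and therefore preserves every weight
  space. Some weight space is non-zero and finite-dimensional, so \<open>T\<close> has an eigenvector
  \<open>u \<noteq> 0\<close> there, \<open>T u = c u\<close>; then \<open>u\<close> lies in the equaliser for this \<open>c\<close>, which is
  therefore all of \<open>V\<close>.\<close>

definition poly_op :: "('a::field \<Rightarrow> 'b::ab_group_add \<Rightarrow> 'b) \<Rightarrow> ('b \<Rightarrow> 'b) \<Rightarrow> 'a poly \<Rightarrow> 'b \<Rightarrow> 'b" where
  "poly_op scale T p v = (\<Sum>k\<le>degree p. scale (coeff p k) ((T ^^ k) v))"

context Vector_Spaces.vector_space
begin

lemma poly_op_eq_sum:
  assumes "degree p < N"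
  shows "poly_op scale T p v = (\<Sum>k<N. coeff p k *s (T ^^ k) v)"
  unfolding poly_op_def
  by (rule sum.mono_neutral_left) (use assms in \<open>auto simp: coeff_eq_0\<close>)

lemma poly_op_0 [simp]: "poly_op scale T 0 v = 0"
  by (simp add: poly_op_def)

lemma poly_op_add: "poly_op scale T (p + q) v = poly_op scale T p v + poly_op scale T q v"
proof -
  define N where "N = Suc (max (degree p) (degree q))"
  have "degree (p + q) < N" "degree p < N" "degree q < N"
    using degree_add_le_max[of p q] by (auto simp: N_def)
  then show ?thesis
    by (simp add: poly_op_eq_sum scale_left_distrib sum.distrib)
qed

lemma poly_op_smult: "poly_op scale T (smult a p) v = a *s poly_op scale T p v"
proof -
  have "degree (smult a p) < Suc (degree p)" "degree p < Suc (degree p)"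
    using degree_smult_le[of a p] by auto
  then show ?thesis
    by (simp only: poly_op_eq_sum scale_sum_right scale_scale coeff_smult)
qed

lemma poly_op_monom: "poly_op scale T (monom a i) v = a *s (T ^^ i) v"
proof -
  have "degree (monom a i) < Suc i"
    using degree_monom_le[of a i] by auto
  then show ?thesis
    by (simp add: poly_op_eq_sum if_distrib[of "\<lambda>c. c *s _"] cong: if_cong)
qed

lemma poly_op_sum:
  "finite A \<Longrightarrow> poly_op scale T (\<Sum>k\<in>A. p k) v = (\<Sum>k\<in>A. poly_op scale T (p k) v)"
  by (induction A rule: finite_induct) (auto simp: poly_op_add)

lemma poly_op_pCons_0:
  assumes "Vector_Spaces.linear scale scale T"
  shows "poly_op scale T (pCons 0 q) v = T (poly_op scale T q v)"
proof -
  interpret T: Vector_Spaces.linear scale scale T by fact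
  define N where "N = Suc (degree q)"
  have "degree (pCons 0 q) < Suc N" "degree q < N"
    using degree_pCons_le[of 0 q] by (auto simp: N_def)
  then show ?thesis
    by (simp add: poly_op_eq_sum sum.lessThan_Suc_shift T.sum T.scale del: sum.lessThan_Suc)
qed

lemma poly_op_linear_factor:
  assumes "Vector_Spaces.linear scale scale T"
  shows "poly_op scale T ([:-c, 1:] * q) v = T (poly_op scale T q v) - c *s poly_op scale T q v"
proof -
  have "[:-c, 1:] * q = pCons 0 q + smult (-c) q"
    by simp
  then show ?thesis
    by (simp only: poly_op_add poly_op_smult poly_op_pCons_0[OF assms] scale_minus_left
        diff_conv_add_uminus)
qed

lemma poly_op_in_subspace:
  assumes "subspace U" "T ` U \<subseteq> U" "v \<in> U"
  shows "poly_op scale T p v \<in> U"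
proof -
  have "(T ^^ k) v \<in> U" for k
    by (induction k) (use assms in auto)
  then show ?thesis
    unfolding poly_op_def by (intro subspace_sum subspace_scale assms(1))
qed

lemma exists_annihilating_poly:
  assumes "finite S" "\<And>k. (T ^^ k) w \<in> span S"
  shows "\<exists>p. p \<noteq> 0 \<and> poly_op scale T p w = 0"
proof (cases "inj_on (\<lambda>k. (T ^^ k) w) {..card S}")
  case True
  define f where "f k = (T ^^ k) w" for k
  define A where "A = f ` {..card S}"
  have "dependent A"
  proof (rule ccontr)
    assume "\<not> dependent A"
    moreover have "A \<subseteq> span S"
      using assms(2) by (auto simp: A_def f_def)
    ultimately have "card A \<le> card S"
      using independent_span_bound[OF assms(1)] by blast
    moreover have "card A = Suc (card S)"
      using True by (simp add: A_def f_def card_image)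
    ultimately show False
      by simp
  qed
  then obtain u where u: "\<exists>v\<in>A. u v \<noteq> 0" "(\<Sum>v\<in>A. u v *s v) = 0"
    using dependent_finite[of A] by (auto simp: A_def)
  define p where "p = (\<Sum>k\<le>card S. monom (u (f k)) k)"
  have "poly_op scale T p w = (\<Sum>k\<le>card S. u (f k) *s f k)"
    by (simp add: p_def f_def poly_op_sum poly_op_monom)
  also have "\<dots> = (\<Sum>v\<in>A. u v *s v)"
    using True by (simp add: A_def f_def sum.reindex)
  finally have "poly_op scale T p w = 0"
    using u(2) by simp
  moreover obtain k where "k \<le> card S" "u (f k) \<noteq> 0"
    using u(1) by (auto simp: A_def)
  then have "coeff p k \<noteq> 0"
    by (simp add: p_def coeff_sum)
  ultimately show ?thesis
    by (metis coeff_0)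
next
  case False
  then obtain i j where "i \<noteq> j" "(T ^^ i) w = (T ^^ j) w"
    unfolding inj_on_def by blast
  then have "poly_op scale T (monom 1 i + monom (-1) j) w = 0"
    "coeff (monom 1 i + monom (-1) j) i = 1"
    by (simp_all add: poly_op_add poly_op_monom)
  then show ?thesis
    by (metis coeff_0 zero_neq_one)
qed

end

lemma eigenvector_of_annihilating_poly:
  fixes scale :: "complex \<Rightarrow> 'v::ab_group_add \<Rightarrow> 'v"
  assumes "vector_space scale" "Vector_Spaces.linear scale scale T"
    and "module.subspace scale U" "T ` U \<subseteq> U"
    and "p \<noteq> 0" "x \<in> U" "x \<noteq> 0" "poly_op scale T p x = 0"
  shows "\<exists>c u. u \<in> U \<and> u \<noteq> 0 \<and> T u = scale c u"
  using assms(5-8)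
proof (induction "degree p" arbitrary: p rule: less_induct)
  case less
  interpret V: Vector_Spaces.vector_space scale by fact
  show ?case
  proof (cases "degree p = 0")
    case True
    then obtain a where "p = [:a:]" "a \<noteq> 0"
      using less.prems(1) by (metis degree_eq_zeroE pCons_0_0)
    with less.prems show ?thesis
      by (simp add: poly_op_def)
  next
    case False
    then obtain c where "poly p c = 0"
      using fundamental_theorem_of_algebra constant_degree by metis
    then obtain q where p: "p = [:-c, 1:] * q"
      by (metis poly_eq_0_iff_dvd dvdE)
    with less.prems(1) have "q \<noteq> 0"
      by auto
    then have "degree q < degree p"
      unfolding p by (subst degree_mult_eq) auto
    define y where "y = poly_op scale T q x"
    have "poly_op scale T p x = T y - scale c y"
      unfolding p y_def by (rule V.poly_op_linear_factor[OF assms(2)])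
    then have "T y = scale c y"
      using less.prems(4) by simp
    moreover have "y \<in> U"
      unfolding y_def by (rule V.poly_op_in_subspace) (use assms less.prems in auto)
    ultimately show ?thesis
      using less.hyps[OF \<open>degree q < degree p\<close> \<open>q \<noteq> 0\<close> less.prems(2,3)] y_def by blast
  qed
qed

lemma exists_eigenvector_fin_dim:
  fixes scale :: "complex \<Rightarrow> 'v::ab_group_add \<Rightarrow> 'v"
  assumes "vector_space scale" "Vector_Spaces.linear scale scale T"
    and "fin_dim scale U" "T ` U \<subseteq> U" "w \<in> U" "w \<noteq> 0"
  shows "\<exists>c u. u \<in> U \<and> u \<noteq> 0 \<and> T u = scale c u"
proof -
  interpret V: Vector_Spaces.vector_space scale by fact
  obtain S where S: "finite S" "V.span S = U"
    using assms(3) by (auto simp: fin_dim_def)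
  then have "V.subspace U"
    using V.subspace_span by blast
  moreover have "(T ^^ k) w \<in> V.span S" for k
    using S(2) by (induction k) (use assms(4,5) in auto)
  then obtain p where "p \<noteq> 0" "poly_op scale T p w = 0"
    using V.exists_annihilating_poly[OF S(1)] by blast
  ultimately show ?thesis
    using eigenvector_of_annihilating_poly assms by blast
qed

definition tau_submodule ::
  "(complex \<Rightarrow> 'v::ab_group_add \<Rightarrow> 'v) \<Rightarrow> ('g \<Rightarrow> ('n::finite \<Rightarrow> int) \<Rightarrow> 'v \<Rightarrow> 'v) \<Rightarrow>
   (('n \<Rightarrow> int) \<Rightarrow> 'n \<Rightarrow> 'v \<Rightarrow> 'v) \<Rightarrow> ('n \<Rightarrow> 'v \<Rightarrow> 'v) \<Rightarrow> 'v set \<Rightarrow> bool" where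
  "tau_submodule sv X K D W \<longleftrightarrow> module.subspace sv W \<and> (\<forall>x r. X x r ` W \<subseteq> W) \<and>
     (\<forall>r i. K r i ` W \<subseteq> W) \<and> (\<forall>i. D i ` W \<subseteq> W)"

lemma irreducible_moduleD:
  fixes sv :: "complex \<Rightarrow> 'v::ab_group_add \<Rightarrow> 'v"
  assumes "irreducible_module sv X K D"
  shows "(UNIV :: 'v set) \<noteq> {0}"
    and "tau_submodule sv X K D W \<Longrightarrow> W = {0} \<or> W = UNIV"
  using assms by (auto simp: irreducible_module_def tau_submodule_def)

lemma tau_moduleD:
  assumes "tau_module sg lb B sv X K D"
  shows "vector_space sv" "Vector_Spaces.linear sv sv (X x r)"
    "Vector_Spaces.linear sv sv (K r i)" "Vector_Spaces.linear sv sv (D i)"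
  using assms by (simp_all add: tau_module_def)

lemma central_operatorD:
  assumes "central_operator sv X K D m z"
  shows "Vector_Spaces.linear sv sv z" "z (X x r v) = X x r (z v)" "z (K r i v) = K r i (z v)"
    "D i (z v) = z (D i v) + sv (of_int (m i)) (z v)"
  using assms unfolding central_operator_def comm_def fun_eq_iff
  by (auto simp: diff_eq_eq)

lemma tau_submodule_equaliser:
  assumes tau: "tau_module sg lb B sv X K D"
    and z1: "central_operator sv X K D m z1" and z2: "central_operator sv X K D m z2"
  shows "tau_submodule sv X K D {v. z1 v = sv c (z2 v)}"
proof -
  interpret V: Vector_Spaces.vector_space sv by (rule tau_moduleD(1)[OF tau])
  interpret Z1: Vector_Spaces.linear sv sv z1 by (rule central_operatorD(1)[OF z1])
  interpret Z2: Vector_Spaces.linear sv sv z2 by (rule central_operatorD(1)[OF z2])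
  have scale_commute: "A (sv a v) = sv a (A v)" if "Vector_Spaces.linear sv sv A" for A a v
    using that by (simp add: Vector_Spaces.linear_iff)
  note X_scale = scale_commute[OF tau_moduleD(2)[OF tau]]
    and K_scale = scale_commute[OF tau_moduleD(3)[OF tau]]
    and D_scale = scale_commute[OF tau_moduleD(4)[OF tau]]
  have "z1 (D i v) = sv c (z2 (D i v))" if "z1 v = sv c (z2 v)" for i v
  proof -
    have "z1 (D i v) = D i (z1 v) - sv (of_int (m i)) (z1 v)"
      by (simp add: central_operatorD(4)[OF z1])
    also have "\<dots> = sv c (D i (z2 v) - sv (of_int (m i)) (z2 v))"
      by (simp add: that D_scale V.scale_right_diff_distrib V.scale_left_commute)
    also have "\<dots> = sv c (z2 (D i v))"
      by (simp add: central_operatorD(4)[OF z2])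
    finally show ?thesis .
  qed
  moreover have "V.subspace {v. z1 v = sv c (z2 v)}"
    by (rule V.subspaceI)
      (auto simp: Z1.add Z2.add Z1.scale Z2.scale V.scale_right_distrib V.scale_left_commute)
  ultimately show ?thesis
    unfolding tau_submodule_def
    by (auto simp: central_operatorD(2,3)[OF z1] central_operatorD(2,3)[OF z2] X_scale K_scale)
qed

lemma tau_submodule_range:
  assumes tau: "tau_module sg lb B sv X K D" and z: "central_operator sv X K D m z"
  shows "tau_submodule sv X K D (range z)"
proof -
  interpret V: Vector_Spaces.vector_space sv by (rule tau_moduleD(1)[OF tau])
  interpret Z: Vector_Spaces.linear sv sv z by (rule central_operatorD(1)[OF z])
  have "D i (z v) = z (D i v + sv (of_int (m i)) v)" for i v
    by (simp add: central_operatorD(4)[OF z] Z.add Z.scale)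
  then show ?thesis
    unfolding tau_submodule_def
    by (auto simp: Z.subspace_image central_operatorD(2,3)[OF z, symmetric])
qed

lemma central_operator_bij:
  assumes tau: "tau_module sg lb B sv X K D" and irr: "irreducible_module sv X K D"
    and z: "central_operator sv X K D m z" and "z \<noteq> (\<lambda>v. 0)"
  shows "bij z"
proof (rule bijI)
  interpret V: Vector_Spaces.vector_space sv by (rule tau_moduleD(1)[OF tau])
  interpret Z: Vector_Spaces.linear sv sv z by (rule central_operatorD(1)[OF z])
  have "{v. z v = sv 0 (z v)} = {0} \<or> {v. z v = sv 0 (z v)} = UNIV"
    by (rule irreducible_moduleD(2)[OF irr tau_submodule_equaliser[OF tau z z]])
  then have "{v. z v = 0} = {0}"
    using \<open>z \<noteq> (\<lambda>v. 0)\<close> by (auto simp: fun_eq_iff)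
  then show "inj z"
    by (auto simp: Z.inj_iff_eq_0)
  have "range z = {0} \<or> range z = UNIV"
    by (rule irreducible_moduleD(2)[OF irr tau_submodule_range[OF tau z]])
  then show "surj z"
    using \<open>z \<noteq> (\<lambda>v. 0)\<close> by (auto simp: fun_eq_iff)
qed

lemma central_operator_comp:
  assumes tau: "tau_module sg lb B sv X K D"
    and z: "central_operator sv X K D m z" and w: "central_operator sv X K D m' w"
  shows "central_operator sv X K D (\<lambda>i. m i + m' i) (z \<circ> w)"
proof -
  interpret V: Vector_Spaces.vector_space sv by (rule tau_moduleD(1)[OF tau])
  interpret Z: Vector_Spaces.linear sv sv z by (rule central_operatorD(1)[OF z])
  have "D i (z (w v)) = z (w (D i v)) + sv (of_int (m i + m' i)) (z (w v))" for i v
    by (simp add: central_operatorD(4)[OF z] central_operatorD(4)[OF w] Z.add Z.scale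
        V.scale_left_distrib)
  then show ?thesis
    using Vector_Spaces.linear_compose[OF central_operatorD(1)[OF w] Z.linear_axioms]
    by (simp add: central_operator_def comm_def fun_eq_iff
        central_operatorD(2,3)[OF z] central_operatorD(2,3)[OF w])
qed

lemma central_operator_inv:
  assumes tau: "tau_module sg lb B sv X K D"
    and z: "central_operator sv X K D m z" and "bij z"
  shows "central_operator sv X K D (\<lambda>i. - m i) (inv z)"
proof -
  interpret V: Vector_Spaces.vector_space sv by (rule tau_moduleD(1)[OF tau])
  interpret Z: Vector_Spaces.linear sv sv z by (rule central_operatorD(1)[OF z])
  have z_inv: "z (inv z v) = v" and inv_z: "inv z (z v) = v" for v
    using \<open>bij z\<close> by (simp_all add: bij_is_surj bij_is_inj surj_f_inv_f)
  have "module_hom sv sv (inv z)"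
    by (rule module_pair.bij_module_hom_imp_inv_module_hom[of sv sv])
      (simp_all add: module_pair_def V.module_axioms module_hom_iff_linear Z.linear_axioms
        \<open>bij z\<close>)
  then have "Vector_Spaces.linear sv sv (inv z)"
    by (simp add: module_hom_iff_linear)
  moreover have "inv z (A v) = A (inv z v)" if "\<And>v. z (A v) = A (z v)" for A v
    by (metis that z_inv inv_z)
  moreover have "inv z (D i (z u)) = D i u + sv (of_int (m i)) u" for i u
    by (metis central_operatorD(4)[OF z] Z.add Z.scale inv_z)
  then have "D i (inv z v) = inv z (D i v) + sv (of_int (- m i)) (inv z v)" for i v
    by (metis z_inv V.scale_minus_left add_diff_cancel_right' diff_conv_add_uminus of_int_minus)
  ultimately show ?thesis
    by (simp add: central_operator_def comm_def fun_eq_iff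
        central_operatorD(2,3)[OF z])
qed

lemma central_operator_weight_space:
  assumes tau: "tau_module sg lb B sv X K D" and z: "central_operator sv X K D m z"
  shows "z ` weight_space H sv X K D \<mu> k \<delta> \<subseteq>
    weight_space H sv X K D \<mu> k (\<lambda>i. \<delta> i + of_int (m i))"
proof -
  interpret V: Vector_Spaces.vector_space sv by (rule tau_moduleD(1)[OF tau])
  interpret Z: Vector_Spaces.linear sv sv z by (rule central_operatorD(1)[OF z])
  show ?thesis
    by (auto simp: weight_space_def central_operatorD(2-4)[OF z, symmetric] Z.scale
        central_operatorD(4)[OF z] V.scale_left_distrib)
qed

lemma fin_dim_weight_module_exists_weight_vector:
  fixes sv :: "complex \<Rightarrow> 'v::ab_group_add \<Rightarrow> 'v"
  assumes "vector_space sv" "fin_dim_weight_module H sv X K D" "(UNIV :: 'v set) \<noteq> {0}"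
  obtains \<mu> k \<delta> w where "w \<in> weight_space H sv X K D \<mu> k \<delta>" "w \<noteq> 0"
proof -
  interpret V: Vector_Spaces.vector_space sv by fact
  show ?thesis
  proof (rule ccontr)
    assume "\<not> ?thesis"
    with that have "(\<Union>\<mu> k \<delta>. weight_space H sv X K D \<mu> k \<delta>) \<subseteq> {0}"
      by blast
    then have "V.span (\<Union>\<mu> k \<delta>. weight_space H sv X K D \<mu> k \<delta>) \<subseteq> V.span {0}"
      by (rule V.span_mono)
    with assms show False
      by (auto simp: fin_dim_weight_module_def)
  qed
qed

lemma central_operator_degree_0_eigenvector:
  fixes sv :: "complex \<Rightarrow> 'v::ab_group_add \<Rightarrow> 'v"
  assumes tau: "tau_module sg lb B sv X K D" and "fin_dim_weight_module H sv X K D"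
    and "(UNIV :: 'v set) \<noteq> {0}" and T: "central_operator sv X K D (\<lambda>_. 0) T"
  obtains c u where "u \<noteq> 0" "T u = sv c u"
proof -
  obtain \<mu> k \<delta> w where w: "w \<in> weight_space H sv X K D \<mu> k \<delta>" "w \<noteq> 0"
    using fin_dim_weight_module_exists_weight_vector tau_moduleD(1)[OF tau] assms(2,3) by metis
  have "T ` weight_space H sv X K D \<mu> k \<delta> \<subseteq> weight_space H sv X K D \<mu> k \<delta>"
    using central_operator_weight_space[OF tau T] by simp
  moreover have "fin_dim sv (weight_space H sv X K D \<mu> k \<delta>)"
    using assms(2) by (simp add: fin_dim_weight_module_def)
  ultimately show ?thesis
    using exists_eigenvector_fin_dim[OF tau_moduleD(1)[OF tau] central_operatorD(1)[OF T]] w that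
    by blast
qed

theorem lemma4p6:
  fixes sg :: "complex \<Rightarrow> 'g::ab_group_add \<Rightarrow> 'g"
    and lb :: "'g \<Rightarrow> 'g \<Rightarrow> 'g"
    and B :: "'g \<Rightarrow> 'g \<Rightarrow> complex"
    and H :: "'g set"
    and sv :: "complex \<Rightarrow> 'v::ab_group_add \<Rightarrow> 'v"
    and X :: "'g \<Rightarrow> ('n::finite \<Rightarrow> int) \<Rightarrow> 'v \<Rightarrow> 'v"
    and K :: "('n \<Rightarrow> int) \<Rightarrow> 'n \<Rightarrow> 'v \<Rightarrow> 'v"
    and D :: "'n \<Rightarrow> 'v \<Rightarrow> 'v"
    and m :: "'n \<Rightarrow> int"
    and z1 z2 :: "'v \<Rightarrow> 'v"
  assumes "CARD('n) \<ge> 2"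
    and "base_data sg lb B H"
    and "tau_module sg lb B sv X K D"
    and "irreducible_module sv X K D"
    and "fin_dim_weight_module H sv X K D"
    and "central_operator sv X K D m z1" and "z1 \<noteq> (\<lambda>v. 0)"
    and "central_operator sv X K D m z2" and "z2 \<noteq> (\<lambda>v. 0)"
  shows "\<exists>c::complex. \<forall>v. z1 v = sv c (z2 v)"
proof -
  note tau = assms(3) and irr = assms(4) and z1 = assms(6) and z2 = assms(8)
  have "bij z2"
    by (rule central_operator_bij[OF tau irr z2 assms(9)])
  define T where "T = inv z2 \<circ> z1"
  have "central_operator sv X K D (\<lambda>_. 0) T"
    using central_operator_comp[OF tau central_operator_inv[OF tau z2 \<open>bij z2\<close>] z1]
    by (simp add: T_def)
  then obtain c u where u: "u \<noteq> 0" "T u = sv c u"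
    using central_operator_degree_0_eigenvector[OF tau assms(5) irreducible_moduleD(1)[OF irr]]
    by blast
  have "z1 u = z2 (T u)"
    using \<open>bij z2\<close> by (simp add: T_def bij_is_surj surj_f_inv_f)
  also have "\<dots> = sv c (z2 u)"
    using central_operatorD(1)[OF z2] by (simp add: u(2) Vector_Spaces.linear_iff)
  finally have "u \<in> {v. z1 v = sv c (z2 v)}" by simp
  then have "{v. z1 v = sv c (z2 v)} = UNIV"
    using irreducible_moduleD(2)[OF irr tau_submodule_equaliser[OF tau z1 z2]] u(1) by blast
  then show ?thesis
    by blast
qed

end
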